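(* Let $E$ be a topological space, let $\Omega\subseteq E$ be a non-empty relatively compact open set with $\partial\Omega\neq\emptyset$, and let $Y$ be a real locally convex Hausdorff topological vector space. Let $g:\overline{\Omega}\to Y$ be continuous and let $f=g|_{\Omega}$. Then the following are equivalent: (c1) $f$ satisfies the convex hull-like property in $\Omega$; (c2) $g$ satisfies the convex hull property in $\overline{\Omega}$, i.e. $g(\Omega)\subseteq\overline{\mathrm{conv}}(g(\partial\Omega))$.
   Context: $\overline{\Omega}$ and $\partial\Omega$ are the closure and boundary of $\Omega$ in $E$; $\overline{\mathrm{conv}}(S)$ is the closed convex hull of $S$. A function $\psi:Y\to\mathbf{R}$ is quasi-convex if for each $r\in\mathbf{R}$ the set $\psi^{-1}(]-\infty,r])$ is convex. A continuous function $f:\Omega\to Y$ satisfies the convex hull-like property in $\Omega$ if for every continuous quasi-convex $\psi:Y\to\mathbf{R}$ there exists $x^*\in\partial\Omega$ such that $\limsup_{x\to x^*,\,x\in\Omega}\psi(f(x))=\sup_{x\in\Omega}\psi(f(x))$. *)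

theory Defs
  imports "HOL-Analysis.Analysis" "HOL-Library.Liminf_Limsup"
begin

definition locally_convex_tvs :: "'b::{real_vector,t2_space} itself \<Rightarrow> bool" where
  "locally_convex_tvs _ \<longleftrightarrow>
     continuous_on UNIV (\<lambda>(x::'b, y). x + y) \<and>
     continuous_on UNIV (\<lambda>(c::real, x::'b). c *\<^sub>R x) \<and>
     (\<forall>U::'b set. open U \<and> 0 \<in> U \<longrightarrow> (\<exists>V. open V \<and> convex V \<and> 0 \<in> V \<and> V \<subseteq> U))"

definition quasi_convex :: "('b::real_vector \<Rightarrow> real) \<Rightarrow> bool" where
  "quasi_convex \<psi> \<longleftrightarrow> (\<forall>r. convex (\<psi> -` {..r}))"

definition convex_hull_like_property ::
  "('a::topological_space \<Rightarrow> 'b::{real_vector,t2_space}) \<Rightarrow> 'a set \<Rightarrow> bool" where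
  "convex_hull_like_property f \<Omega> \<longleftrightarrow>
     (\<forall>\<psi>::'b \<Rightarrow> real. continuous_on UNIV \<psi> \<and> quasi_convex \<psi> \<longrightarrow>
        (\<exists>x\<in>frontier \<Omega>.
           Limsup (at x within \<Omega>) (\<lambda>y. ereal (\<psi> (f y))) = (SUP y\<in>\<Omega>. ereal (\<psi> (f y)))))"

definition convex_hull_property ::
  "('a::topological_space \<Rightarrow> 'b::{real_vector,t2_space}) \<Rightarrow> 'a set \<Rightarrow> bool" where
  "convex_hull_property g \<Omega> \<longleftrightarrow> g ` \<Omega> \<subseteq> closure (convex hull (g ` frontier \<Omega>))"

end

theory Submission
  imports Defs
begin

(*
  If g x0 lies outside the closed convex hull K of g(\<partial>\<Omega>), choose a convex symmetric
  neighbourhood V of 0 with (g x0 - V) \<inter> K = {}.  Then \<psi> y = inf {t > 0. y \<in> K + t V} is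
  continuous and quasi-convex, vanishes on K and is at least 1 at g x0, so no boundary point
  can realise sup (\<psi> \<circ> g) as a limsup.  Conversely, \<psi> \<circ> g attains its maximum over the
  compact boundary at some point x1; the closed convex sublevel set of that value contains g(\<partial>\<Omega>),
  hence g(\<Omega>), and by continuity of g the limsup at x1 is \<psi> (g x1).
*)

lemma locally_convex_tvs_continuous_scaleR_left:
  assumes "locally_convex_tvs TYPE('b::{real_vector,t2_space})"
  shows "continuous_on UNIV (\<lambda>s::real. s *\<^sub>R (z::'b))"
proof -
  have "continuous_on UNIV (\<lambda>(c::real, x::'b). c *\<^sub>R x)"
    using assms by (simp add: locally_convex_tvs_def)
  from continuous_on_compose[OF _ continuous_on_subset[OF this], of UNIV "\<lambda>s. (s, z)"]
  show ?thesis by (simp add: o_def continuous_on_Pair continuous_on_const continuous_on_id)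
qed

lemma locally_convex_tvs_open_affine_vimage:
  assumes "locally_convex_tvs TYPE('b::{real_vector,t2_space})" "open U"
  shows "open ((\<lambda>z::'b. c *\<^sub>R z + a) -` U)"
proof -
  have add: "continuous_on UNIV (\<lambda>(x::'b, y). x + y)"
    and mult: "continuous_on UNIV (\<lambda>(c::real, x::'b). c *\<^sub>R x)"
    using assms(1) by (simp_all add: locally_convex_tvs_def)
  have "continuous_on UNIV (\<lambda>z::'b. c *\<^sub>R z)"
    using continuous_on_compose[OF _ continuous_on_subset[OF mult], of UNIV "\<lambda>z. (c, z)"]
    by (simp add: o_def continuous_on_Pair continuous_on_const continuous_on_id)
  then have "continuous_on UNIV (\<lambda>z::'b. c *\<^sub>R z + a)"
    using continuous_on_compose[OF _ continuous_on_subset[OF add], of UNIV "\<lambda>z. (c *\<^sub>R z, a)"]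
    by (simp add: o_def continuous_on_Pair continuous_on_const)
  then show ?thesis using assms(2) by (rule open_vimage[rotated])
qed

lemma locally_convex_tvs_absorbing:
  assumes "locally_convex_tvs TYPE('b::{real_vector,t2_space})" "open V" "0 \<in> V"
  shows "\<exists>t>0. \<exists>v\<in>V. (z::'b) = t *\<^sub>R v"
proof -
  have "open ((\<lambda>s::real. s *\<^sub>R z) -` V)"
    by (rule open_vimage[OF assms(2) locally_convex_tvs_continuous_scaleR_left[OF assms(1)]])
  moreover have "0 \<in> (\<lambda>s::real. s *\<^sub>R z) -` V" using assms(3) by simp
  ultimately obtain d where d: "d > 0" "ball 0 d \<subseteq> (\<lambda>s::real. s *\<^sub>R z) -` V"
    by (meson open_contains_ball)
  moreover have "d/2 \<in> ball (0::real) d" using d(1) by simp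
  ultimately have "(d/2) *\<^sub>R z \<in> V" by blast
  moreover have "z = (2/d) *\<^sub>R ((d/2) *\<^sub>R z)" using d by simp
  ultimately show ?thesis using d(1) by (metis zero_less_divide_iff zero_less_numeral)
qed

lemma locally_convex_tvs_symmetric_convex_nhd:
  assumes "locally_convex_tvs TYPE('b::{real_vector,t2_space})" "open U" "p \<in> U"
  obtains V where "open V" "convex V" "0 \<in> V" "\<And>v. v \<in> V \<Longrightarrow> - v \<in> V"
    "\<And>v. v \<in> V \<Longrightarrow> p + v \<in> (U::'b set)"
proof -
  have "open ((\<lambda>z. 1 *\<^sub>R z + p) -` U)"
    by (rule locally_convex_tvs_open_affine_vimage[OF assms(1,2)])
  moreover have "0 \<in> (\<lambda>z. 1 *\<^sub>R z + p) -` U" using assms(3) by simp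
  ultimately obtain V0 where V0: "open V0" "convex V0" "0 \<in> V0" "V0 \<subseteq> (\<lambda>z. 1 *\<^sub>R z + p) -` U"
    using assms(1) unfolding locally_convex_tvs_def by blast
  define V where "V = V0 \<inter> uminus -` V0"
  have "open V"
    using locally_convex_tvs_open_affine_vimage[OF assms(1) V0(1), of "-1" 0] V0(1)
    by (simp add: V_def open_Int)
  moreover have "convex V"
    unfolding V_def by (intro convex_Int V0 convex_linear_vimage linear_uminus)
  moreover have "0 \<in> V" "\<And>v. v \<in> V \<Longrightarrow> - v \<in> V" "\<And>v. v \<in> V \<Longrightarrow> p + v \<in> U"
    using V0 by (auto simp: V_def add.commute)
  ultimately show thesis using that by blast
qed

lemma convex_scaleR_mem:
  assumes "convex V" "0 \<in> V" "v \<in> V" "0 \<le> a" "a \<le> 1"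
  shows "a *\<^sub>R v \<in> V"
  using convexD_alt[OF assms] by simp

lemma convex_scaleR_add_eq_scaleR:
  assumes "convex V" "v \<in> V" "w \<in> V" "0 < t" "0 < s"
  obtains u where "u \<in> V" "t *\<^sub>R v + s *\<^sub>R w = (t + s) *\<^sub>R u"
proof
  show "(t/(t+s)) *\<^sub>R v + (s/(t+s)) *\<^sub>R w \<in> V"
    using mem_convex_alt[OF assms(1-3), of t s] assms(4,5) by simp
  show "t *\<^sub>R v + s *\<^sub>R w = (t + s) *\<^sub>R ((t/(t+s)) *\<^sub>R v + (s/(t+s)) *\<^sub>R w)"
    using assms(4,5) by (simp add: scaleR_add_right)
qed

definition minkowski_levels :: "'b::real_vector set \<Rightarrow> 'b set \<Rightarrow> 'b \<Rightarrow> real set" where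
  "minkowski_levels C V y = {t. 0 < t \<and> (\<exists>c\<in>C. \<exists>v\<in>V. y = c + t *\<^sub>R v)}"

text \<open>Meaningful only when V absorbs every vector; otherwise the infimum may be over the
  empty set.\<close>
definition minkowski_distance :: "'b::real_vector set \<Rightarrow> 'b set \<Rightarrow> 'b \<Rightarrow> real" where
  "minkowski_distance C V y = Inf (minkowski_levels C V y)"

lemma bdd_below_minkowski_levels: "bdd_below (minkowski_levels C V y)"
  unfolding minkowski_levels_def by (rule bdd_belowI[of _ 0]) auto

lemma minkowski_distance_le: "t \<in> minkowski_levels C V y \<Longrightarrow> minkowski_distance C V y \<le> t"
  unfolding minkowski_distance_def by (rule cInf_lower[OF _ bdd_below_minkowski_levels])

locale convex_absorbing =
  fixes C V :: "'b::real_vector set"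
  assumes convex_C: "convex C" and nonempty_C: "C \<noteq> {}"
    and convex_V: "convex V" and zero_in_V: "0 \<in> V"
    and absorbing_V: "\<exists>t>0. \<exists>v\<in>V. z = t *\<^sub>R v"
begin

lemma minkowski_levels_nonempty: "minkowski_levels C V y \<noteq> {}"
proof -
  obtain c where "c \<in> C" using nonempty_C by blast
  moreover obtain t v where "t > 0" "v \<in> V" "y - c = t *\<^sub>R v"
    using absorbing_V by blast
  ultimately have "t \<in> minkowski_levels C V y"
    unfolding minkowski_levels_def by (force simp: algebra_simps)
  then show ?thesis by blast
qed

lemma minkowski_distance_ge:
  "(\<And>t. t \<in> minkowski_levels C V y \<Longrightarrow> a \<le> t) \<Longrightarrow> a \<le> minkowski_distance C V y"
  unfolding minkowski_distance_def by (rule cInf_greatest[OF minkowski_levels_nonempty])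

lemma minkowski_levels_upward_closed:
  assumes "t \<in> minkowski_levels C V y" "t \<le> t'"
  shows "t' \<in> minkowski_levels C V y"
proof -
  obtain c v where cv: "0 < t" "c \<in> C" "v \<in> V" "y = c + t *\<^sub>R v"
    using assms(1) unfolding minkowski_levels_def by blast
  have "(t/t') *\<^sub>R v \<in> V"
    using convex_scaleR_mem[OF convex_V zero_in_V cv(3)] cv(1) assms(2) by simp
  moreover have "y = c + t' *\<^sub>R ((t/t') *\<^sub>R v)" using cv assms(2) by simp
  moreover have "0 < t'" using cv(1) assms(2) by linarith
  ultimately show ?thesis using cv(2) unfolding minkowski_levels_def by blast
qed

lemma minkowski_distance_less_imp_mem:
  assumes "minkowski_distance C V y < t"
  shows "t \<in> minkowski_levels C V y"
proof -
  obtain t0 where "t0 \<in> minkowski_levels C V y" "t0 < t"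
    using assms cInf_less_iff[OF minkowski_levels_nonempty bdd_below_minkowski_levels]
    unfolding minkowski_distance_def by blast
  then show ?thesis using minkowski_levels_upward_closed by simp
qed

lemma minkowski_distance_eq_0:
  assumes "c \<in> C"
  shows "minkowski_distance C V c = 0"
proof (rule antisym)
  show "0 \<le> minkowski_distance C V c"
    by (rule minkowski_distance_ge) (simp add: minkowski_levels_def)
  have "minkowski_distance C V c \<le> t" if "t > 0" for t
  proof (rule minkowski_distance_le)
    have "c = c + t *\<^sub>R 0" by simp
    then show "t \<in> minkowski_levels C V c"
      using that assms zero_in_V unfolding minkowski_levels_def by blast
  qed
  then show "minkowski_distance C V c \<le> 0"
    by (metis dense not_le)
qed

lemma minkowski_distance_add_le:
  assumes "0 < s" "w \<in> V"
  shows "minkowski_distance C V (y + s *\<^sub>R w) \<le> minkowski_distance C V y + s"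
proof -
  have "minkowski_distance C V (y + s *\<^sub>R w) - s \<le> minkowski_distance C V y"
  proof (rule minkowski_distance_ge)
    fix t assume "t \<in> minkowski_levels C V y"
    then obtain c v where cv: "0 < t" "c \<in> C" "v \<in> V" "y = c + t *\<^sub>R v"
      unfolding minkowski_levels_def by blast
    obtain u where u: "u \<in> V" "t *\<^sub>R v + s *\<^sub>R w = (t + s) *\<^sub>R u"
      using convex_scaleR_add_eq_scaleR[OF convex_V cv(3) assms(2) cv(1) assms(1)] .
    have "y + s *\<^sub>R w = c + (t + s) *\<^sub>R u" using cv(4) u(2) by (metis add.assoc)
    moreover have "0 < t + s" using cv(1) assms(1) by linarith
    ultimately have "t + s \<in> minkowski_levels C V (y + s *\<^sub>R w)"
      using cv(2) u(1) unfolding minkowski_levels_def by blast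
    then show "minkowski_distance C V (y + s *\<^sub>R w) - s \<le> t"
      using minkowski_distance_le by fastforce
  qed
  then show ?thesis by simp
qed

lemma one_le_minkowski_distance:
  assumes "\<And>c v. c \<in> C \<Longrightarrow> v \<in> V \<Longrightarrow> p \<noteq> c + v"
  shows "1 \<le> minkowski_distance C V p"
proof (rule ccontr)
  assume "\<not> 1 \<le> minkowski_distance C V p"
  then have "1 \<in> minkowski_levels C V p" by (simp add: minkowski_distance_less_imp_mem)
  then show False using assms unfolding minkowski_levels_def by auto
qed

lemma quasi_convex_minkowski_distance: "quasi_convex (minkowski_distance C V)"
  unfolding quasi_convex_def convex_def
proof (intro allI ballI impI)
  fix r u v :: real and x y :: 'b
  assume xy: "x \<in> minkowski_distance C V -` {..r}" "y \<in> minkowski_distance C V -` {..r}"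
    and uv: "0 \<le> u" "0 \<le> v" "u + v = 1"
  have "minkowski_distance C V (u *\<^sub>R x + v *\<^sub>R y) \<le> t" if "r < t" for t
  proof (rule minkowski_distance_le)
    have "t \<in> minkowski_levels C V x" "t \<in> minkowski_levels C V y"
      using xy that by (auto intro: minkowski_distance_less_imp_mem)
    then obtain c1 v1 c2 v2 where h: "0 < t" "c1 \<in> C" "v1 \<in> V" "x = c1 + t *\<^sub>R v1"
      "c2 \<in> C" "v2 \<in> V" "y = c2 + t *\<^sub>R v2"
      unfolding minkowski_levels_def by blast
    have "u *\<^sub>R c1 + v *\<^sub>R c2 \<in> C" using convex_C h uv unfolding convex_def by blast
    moreover have "u *\<^sub>R v1 + v *\<^sub>R v2 \<in> V" using convex_V h uv unfolding convex_def by blast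
    moreover have "u *\<^sub>R x + v *\<^sub>R y = (u *\<^sub>R c1 + v *\<^sub>R c2) + t *\<^sub>R (u *\<^sub>R v1 + v *\<^sub>R v2)"
      using h by (simp add: algebra_simps)
    ultimately show "t \<in> minkowski_levels C V (u *\<^sub>R x + v *\<^sub>R y)"
      using h(1) unfolding minkowski_levels_def by blast
  qed
  then show "u *\<^sub>R x + v *\<^sub>R y \<in> minkowski_distance C V -` {..r}"
    by (auto intro: dense_ge)
qed

end

lemma continuous_on_minkowski_distance:
  fixes C V :: "'b::{real_vector,t2_space} set"
  assumes "convex_absorbing C V" "locally_convex_tvs TYPE('b)" "open V"
    and symmetric: "\<And>v. v \<in> V \<Longrightarrow> - v \<in> V"
  shows "continuous_on UNIV (minkowski_distance C V)"
proof -
  interpret convex_absorbing C V by fact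
  have "isCont (minkowski_distance C V) y" for y
    unfolding isCont_def tendsto_iff
  proof (intro allI impI)
    fix e :: real assume e: "0 < e"
    let ?S = "(\<lambda>z. (2/e) *\<^sub>R z + - ((2/e) *\<^sub>R y)) -` V"
    have "open ?S" by (rule locally_convex_tvs_open_affine_vimage[OF assms(2,3)])
    moreover have "y \<in> ?S" using zero_in_V by simp
    moreover have "dist (minkowski_distance C V y') (minkowski_distance C V y) < e"
      if "y' \<in> ?S" for y'
    proof -
      define w where "w = (2/e) *\<^sub>R (y' - y)"
      have w: "w \<in> V" using that by (simp add: w_def algebra_simps)
      have y': "y' = y + (e/2) *\<^sub>R w" and y: "y = y' + (e/2) *\<^sub>R (- w)"
        using e by (simp_all add: w_def)
      have "minkowski_distance C V y' \<le> minkowski_distance C V y + e/2"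
        using minkowski_distance_add_le[OF _ w, of "e/2" y] e y' by simp
      moreover have "minkowski_distance C V y \<le> minkowski_distance C V y' + e/2"
        using minkowski_distance_add_le[OF _ symmetric[OF w], of "e/2" y'] e y by simp
      ultimately show ?thesis using e by (simp add: dist_real_def abs_le_iff)
    qed
    ultimately show "\<forall>\<^sub>F y' in at y. dist (minkowski_distance C V y') (minkowski_distance C V y) < e"
      unfolding eventually_at_topological by blast
  qed
  then show ?thesis by (simp add: continuous_on_eq_continuous_at)
qed

lemma locally_convex_tvs_quasi_convex_separation:
  fixes C :: "'b::{real_vector,t2_space} set"
  assumes lc: "locally_convex_tvs TYPE('b)" and "convex C" "C \<noteq> {}" "p \<notin> closure C"
  obtains \<psi> where "continuous_on UNIV \<psi>" "quasi_convex \<psi>" "\<And>c. c \<in> C \<Longrightarrow> \<psi> c < \<psi> p"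
proof -
  obtain V where V: "open V" "convex V" "0 \<in> V" "\<And>v. v \<in> V \<Longrightarrow> - v \<in> V"
    "\<And>v. v \<in> V \<Longrightarrow> p + v \<in> - closure C"
    using locally_convex_tvs_symmetric_convex_nhd[OF lc open_Compl[OF closed_closure] Compl_iff[THEN iffD2, OF assms(4)]]
    by blast
  have "convex_absorbing C V"
    using assms(2,3) V(2,3) locally_convex_tvs_absorbing[OF lc V(1,3)]
    by unfold_locales auto
  then interpret convex_absorbing C V .
  have "p \<noteq> c + v" if "c \<in> C" "v \<in> V" for c v
  proof
    assume "p = c + v"
    then have "c \<in> - closure C" using V(5)[OF V(4)[OF \<open>v \<in> V\<close>]] by simp
    then show False using closure_subset \<open>c \<in> C\<close> by blast
  qed
  then have "1 \<le> minkowski_distance C V p" by (rule one_le_minkowski_distance)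
  then show thesis
    using that[of "minkowski_distance C V"] minkowski_distance_eq_0 quasi_convex_minkowski_distance
      continuous_on_minkowski_distance[OF \<open>convex_absorbing C V\<close> lc V(1,4)]
    by simp
qed

lemma Limsup_at_frontier_restrict:
  fixes \<Omega> :: "'a::topological_space set" and g :: "'a \<Rightarrow> 'b::t2_space" and \<psi> :: "'b \<Rightarrow> real"
  assumes "open \<Omega>" "continuous_on (closure \<Omega>) g" "continuous_on UNIV \<psi>" "x \<in> frontier \<Omega>"
  shows "Limsup (at x within \<Omega>) (\<lambda>y. ereal (\<psi> (restrict g \<Omega> y))) = ereal (\<psi> (g x))"
proof -
  have "x \<in> closure \<Omega>" "x \<notin> \<Omega>"
    using assms(1,4) by (auto simp: frontier_def interior_open)
  then have nontrivial: "\<not> trivial_limit (at x within \<Omega>)"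
    by (auto simp: trivial_limit_within closure_def)
  have "(g \<longlongrightarrow> g x) (at x within closure \<Omega>)"
    using assms(2) \<open>x \<in> closure \<Omega>\<close> by (simp add: continuous_on_def)
  then have "(g \<longlongrightarrow> g x) (at x within \<Omega>)"
    by (rule tendsto_within_subset) (rule closure_subset)
  moreover have "isCont \<psi> (g x)" using assms(3) by (simp add: continuous_on_eq_continuous_at)
  ultimately have "((\<lambda>y. \<psi> (g y)) \<longlongrightarrow> \<psi> (g x)) (at x within \<Omega>)"
    by (rule isCont_tendsto_compose[rotated])
  then have "((\<lambda>y. ereal (\<psi> (g y))) \<longlongrightarrow> ereal (\<psi> (g x))) (at x within \<Omega>)"
    by (rule tendsto_ereal)
  have "\<forall>\<^sub>F y in at x within \<Omega>. ereal (\<psi> (restrict g \<Omega> y)) = ereal (\<psi> (g y))"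
    by (simp add: eventually_at_filter)
  then have "Limsup (at x within \<Omega>) (\<lambda>y. ereal (\<psi> (restrict g \<Omega> y))) =
      Limsup (at x within \<Omega>) (\<lambda>y. ereal (\<psi> (g y)))"
    by (rule Limsup_eq)
  also have "\<dots> = ereal (\<psi> (g x))"
    by (rule lim_imp_Limsup[OF nontrivial \<open>((\<lambda>y. ereal (\<psi> (g y))) \<longlongrightarrow> _) _\<close>])
  finally show ?thesis .
qed

lemma Limsup_le_SUP_restrict:
  "Limsup (at x within \<Omega>) (\<lambda>y. ereal (\<psi> (restrict g \<Omega> y))) \<le> (SUP y\<in>\<Omega>. ereal (\<psi> (restrict g \<Omega> y)))"
  by (intro Limsup_bounded) (auto simp: eventually_at_filter intro!: always_eventually SUP_upper)

lemma convex_hull_property_if_convex_hull_like_property: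
  fixes \<Omega> :: "'a::topological_space set" and g :: "'a \<Rightarrow> 'b::{real_vector,t2_space}"
  assumes "locally_convex_tvs TYPE('b)" "open \<Omega>" "frontier \<Omega> \<noteq> {}"
    and "continuous_on (closure \<Omega>) g"
    and "convex_hull_like_property (restrict g \<Omega>) \<Omega>"
  shows "convex_hull_property g \<Omega>"
  unfolding convex_hull_property_def
proof (rule subsetI, rule ccontr)
  fix p assume "p \<in> g ` \<Omega>" and p: "p \<notin> closure (convex hull g ` frontier \<Omega>)"
  then obtain x0 where x0: "x0 \<in> \<Omega>" "p = g x0" by blast
  obtain \<psi> where \<psi>: "continuous_on UNIV \<psi>" "quasi_convex \<psi>"
    "\<And>c. c \<in> convex hull g ` frontier \<Omega> \<Longrightarrow> \<psi> c < \<psi> p"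
    using locally_convex_tvs_quasi_convex_separation[OF assms(1) convex_convex_hull _ p] assms(3)
    by auto
  obtain x where x: "x \<in> frontier \<Omega>"
    "Limsup (at x within \<Omega>) (\<lambda>y. ereal (\<psi> (restrict g \<Omega> y))) = (SUP y\<in>\<Omega>. ereal (\<psi> (restrict g \<Omega> y)))"
    using assms(5) \<psi>(1,2) unfolding convex_hull_like_property_def by blast
  have "ereal (\<psi> p) \<le> (SUP y\<in>\<Omega>. ereal (\<psi> (restrict g \<Omega> y)))"
    using x0 by (auto intro: SUP_upper2)
  also have "\<dots> = ereal (\<psi> (g x))"
    using x Limsup_at_frontier_restrict[OF assms(2,4) \<psi>(1) x(1)] by simp
  finally have "\<psi> p \<le> \<psi> (g x)" by simp
  moreover have "g x \<in> convex hull g ` frontier \<Omega>" using x(1) by (simp add: hull_inc)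
  ultimately show False using \<psi>(3) by fastforce
qed

lemma convex_hull_like_property_if_convex_hull_property:
  fixes \<Omega> :: "'a::topological_space set" and g :: "'a \<Rightarrow> 'b::{real_vector,t2_space}"
  assumes "open \<Omega>" "compact (closure \<Omega>)" "frontier \<Omega> \<noteq> {}"
    and "continuous_on (closure \<Omega>) g" "convex_hull_property g \<Omega>"
  shows "convex_hull_like_property (restrict g \<Omega>) \<Omega>"
  unfolding convex_hull_like_property_def
proof (intro allI impI)
  fix \<psi> :: "'b \<Rightarrow> real" assume \<psi>: "continuous_on UNIV \<psi> \<and> quasi_convex \<psi>"
  have frontier_sub: "frontier \<Omega> \<subseteq> closure \<Omega>" by (simp add: frontier_def)
  have "compact (frontier \<Omega>)"
    using compact_Int_closed[OF assms(2) frontier_closed[of \<Omega>]] frontier_sub by (simp add: Int_absorb1)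
  moreover have "continuous_on (frontier \<Omega>) (\<lambda>y. \<psi> (g y))"
    using continuous_on_compose2[of UNIV \<psi> "frontier \<Omega>" g] \<psi>
      continuous_on_subset[OF assms(4) frontier_sub] by blast
  ultimately obtain x where x: "x \<in> frontier \<Omega>" "\<And>y. y \<in> frontier \<Omega> \<Longrightarrow> \<psi> (g y) \<le> \<psi> (g x)"
    using continuous_attains_sup[OF _ assms(3)] by fastforce
  define L where "L = \<psi> -` {..\<psi> (g x)}"
  have "convex L" using \<psi> unfolding L_def quasi_convex_def by blast
  moreover have "closed L"
    unfolding L_def by (rule closed_vimage[OF closed_atMost]) (use \<psi> in blast)
  moreover have "g ` frontier \<Omega> \<subseteq> L" using x unfolding L_def by auto
  ultimately have "closure (convex hull g ` frontier \<Omega>) \<subseteq> L"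
    by (intro closure_minimal hull_minimal)
  then have "\<psi> (g y) \<le> \<psi> (g x)" if "y \<in> \<Omega>" for y
    using assms(5) that unfolding convex_hull_property_def L_def by blast
  then have "(SUP y\<in>\<Omega>. ereal (\<psi> (restrict g \<Omega> y))) \<le> ereal (\<psi> (g x))"
    by (intro SUP_least) simp
  also have "\<dots> = Limsup (at x within \<Omega>) (\<lambda>y. ereal (\<psi> (restrict g \<Omega> y)))"
    using Limsup_at_frontier_restrict[OF assms(1,4) _ x(1)] \<psi> by simp
  finally have "(SUP y\<in>\<Omega>. ereal (\<psi> (restrict g \<Omega> y))) \<le>
      Limsup (at x within \<Omega>) (\<lambda>y. ereal (\<psi> (restrict g \<Omega> y)))" .
  then have "Limsup (at x within \<Omega>) (\<lambda>y. ereal (\<psi> (restrict g \<Omega> y))) =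
      (SUP y\<in>\<Omega>. ereal (\<psi> (restrict g \<Omega> y)))"
    by (intro antisym Limsup_le_SUP_restrict)
  with x(1) show "\<exists>x\<in>frontier \<Omega>. Limsup (at x within \<Omega>) (\<lambda>y. ereal (\<psi> (restrict g \<Omega> y))) =
      (SUP y\<in>\<Omega>. ereal (\<psi> (restrict g \<Omega> y)))" ..
qed

theorem proposition3:
  fixes \<Omega> :: "'a::topological_space set" and g :: "'a \<Rightarrow> 'b::{real_vector,t2_space}"
  assumes "locally_convex_tvs TYPE('b)"
    and "\<Omega> \<noteq> {}" and "open \<Omega>" and "compact (closure \<Omega>)" and "frontier \<Omega> \<noteq> {}"
    and "continuous_on (closure \<Omega>) g"
  shows "convex_hull_like_property (restrict g \<Omega>) \<Omega> \<longleftrightarrow> convex_hull_property g \<Omega>"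
  using convex_hull_property_if_convex_hull_like_property[OF assms(1,3,5,6)]
    convex_hull_like_property_if_convex_hull_property[OF assms(3-6)] ..

end
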